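(* Let $(E,\|\cdot\|)$ be a normed space over $K$ and let $A$ be a local compactoid in $E$. If the linear span $[A]$ is infinite-dimensional, then $[A]$, with the norm restricted from $E$, is not a Banach space.
   Context: $K$ is a field complete with respect to a non-trivial non-archimedean absolute value, $B_K=\{x\in K:|x|\le1\}$; norms are non-archimedean. Absolutely convex = $B_K$-submodule; $[X]$ is the linear span of $X$. An absolutely convex $A\subseteq E$ is a local compactoid in $E$ if for every zero neighbourhood $U$ there is a finite $S\subseteq E$ with $A\subseteq U+[S]$. *)

theory Defs
  imports Complex_Main
begin

definition nonarch_abs :: "('k::field \<Rightarrow> real) \<Rightarrow> bool" where
  "nonarch_abs absK \<longleftrightarrow>
     (\<forall>x. 0 \<le> absK x) \<and> (\<forall>x. absK x = 0 \<longleftrightarrow> x = 0) \<and>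
     (\<forall>x y. absK (x * y) = absK x * absK y) \<and>
     (\<forall>x y. absK (x + y) \<le> max (absK x) (absK y))"

definition nontrivial_abs :: "('k::field \<Rightarrow> real) \<Rightarrow> bool" where
  "nontrivial_abs absK \<longleftrightarrow> (\<exists>x. x \<noteq> 0 \<and> absK x \<noteq> 1)"

definition complete_abs :: "('k::field \<Rightarrow> real) \<Rightarrow> bool" where
  "complete_abs absK \<longleftrightarrow>
     (\<forall>f::nat \<Rightarrow> 'k. (\<forall>e>0. \<exists>M. \<forall>m\<ge>M. \<forall>n\<ge>M. absK (f m - f n) < e)
        \<longrightarrow> (\<exists>l. \<forall>e>0. \<exists>M. \<forall>n\<ge>M. absK (f n - l) < e))"

definition nonarch_valued_field :: "('k::field \<Rightarrow> real) \<Rightarrow> bool" where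
  "nonarch_valued_field absK \<longleftrightarrow> nonarch_abs absK \<and> nontrivial_abs absK \<and> complete_abs absK"

definition nonarch_norm ::
  "('k::field \<Rightarrow> real) \<Rightarrow> ('k \<Rightarrow> 'e::ab_group_add \<Rightarrow> 'e) \<Rightarrow> ('e \<Rightarrow> real) \<Rightarrow> bool" where
  "nonarch_norm absK scale N \<longleftrightarrow>
     (\<forall>x. 0 \<le> N x) \<and> (\<forall>x. N x = 0 \<longleftrightarrow> x = 0) \<and>
     (\<forall>a x. N (scale a x) = absK a * N x) \<and>
     (\<forall>x y. N (x + y) \<le> max (N x) (N y))"

definition abs_convex ::
  "('k::field \<Rightarrow> real) \<Rightarrow> ('k \<Rightarrow> 'e::ab_group_add \<Rightarrow> 'e) \<Rightarrow> 'e set \<Rightarrow> bool" where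
  "abs_convex absK scale A \<longleftrightarrow>
     0 \<in> A \<and> (\<forall>x\<in>A. \<forall>y\<in>A. x + y \<in> A) \<and>
     (\<forall>a x. absK a \<le> 1 \<longrightarrow> x \<in> A \<longrightarrow> scale a x \<in> A)"

definition zero_nhd :: "('e::ab_group_add \<Rightarrow> real) \<Rightarrow> 'e set \<Rightarrow> bool" where
  "zero_nhd N U \<longleftrightarrow> (\<exists>e>0. {x. N x < e} \<subseteq> U)"

definition local_compactoid ::
  "('k::field \<Rightarrow> real) \<Rightarrow> ('k \<Rightarrow> 'e::ab_group_add \<Rightarrow> 'e) \<Rightarrow> ('e \<Rightarrow> real) \<Rightarrow> 'e set \<Rightarrow> bool" where
  "local_compactoid absK scale N A \<longleftrightarrow>
     abs_convex absK scale A \<and>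
     (\<forall>U. zero_nhd N U \<longrightarrow>
        (\<exists>S. finite S \<and> A \<subseteq> {u + s | u s. u \<in> U \<and> s \<in> module.span scale S}))"

definition infinite_dimensional :: "('k::field \<Rightarrow> 'e::ab_group_add \<Rightarrow> 'e) \<Rightarrow> 'e set \<Rightarrow> bool" where
  "infinite_dimensional scale V \<longleftrightarrow> \<not> (\<exists>S. finite S \<and> S \<subseteq> V \<and> module.span scale S = V)"

definition banach_subset :: "('e::ab_group_add \<Rightarrow> real) \<Rightarrow> 'e set \<Rightarrow> bool" where
  "banach_subset N V \<longleftrightarrow>
     (\<forall>f::nat \<Rightarrow> 'e. (\<forall>n. f n \<in> V) \<and> (\<forall>e>0. \<exists>M. \<forall>m\<ge>M. \<forall>n\<ge>M. N (f m - f n) < e)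
        \<longrightarrow> (\<exists>l\<in>V. \<forall>e>0. \<exists>M. \<forall>n\<ge>M. N (f n - l) < e))"

end

(*
  Suppose the span V = [A] is complete. As A is absolutely convex and K has a scalar lam with
  |lam| > 1, V is the union of the sets lam^n A, so by Baire's theorem one of them is dense in
  a ball of V; since A - A is contained in A, the closure of A then contains a ball
  {x in V. N x < r}. Being a local compactoid, A lies within r/|lam| of a finite-dimensional
  subspace, and this subspace can be taken inside V: finite-dimensional extensions of the
  closed subspace V are closed (K is complete), so every vector outside V can be traded for
  one inside V using almost nearest points. Rescaling by powers of lam then shows that the
  ball, hence all of V, lies in the closure of that finite-dimensional subspace, which is
  closed. So V is finite-dimensional.
*)
theory Submission
  imports Defs "HOL-Analysis.Urysohn"
begin

definition cauchy_wrt :: "('a::ab_group_add \<Rightarrow> real) \<Rightarrow> (nat \<Rightarrow> 'a) \<Rightarrow> bool" where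
  "cauchy_wrt F f \<longleftrightarrow> (\<forall>e>0. \<exists>M. \<forall>m\<ge>M. \<forall>n\<ge>M. F (f m - f n) < e)"

definition tendsto_wrt :: "('a::ab_group_add \<Rightarrow> real) \<Rightarrow> (nat \<Rightarrow> 'a) \<Rightarrow> 'a \<Rightarrow> bool" where
  "tendsto_wrt F f l \<longleftrightarrow> (\<forall>e>0. \<exists>M. \<forall>n\<ge>M. F (f n - l) < e)"

lemma complete_abs_iff:
  "complete_abs absK \<longleftrightarrow> (\<forall>f. cauchy_wrt absK f \<longrightarrow> (\<exists>l. tendsto_wrt absK f l))"
  unfolding complete_abs_def cauchy_wrt_def tendsto_wrt_def ..

lemma banach_subset_iff:
  "banach_subset N V \<longleftrightarrow>
     (\<forall>f. range f \<subseteq> V \<and> cauchy_wrt N f \<longrightarrow> (\<exists>l\<in>V. tendsto_wrt N f l))"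
  unfolding banach_subset_def cauchy_wrt_def tendsto_wrt_def image_subset_iff by simp

locale nonarch_normed_space = vector_space scale
  for scale :: "'k::field \<Rightarrow> 'e::ab_group_add \<Rightarrow> 'e" +
  fixes absK :: "'k \<Rightarrow> real" and N :: "'e \<Rightarrow> real"
  assumes nonarch_abs: "nonarch_abs absK"
    and nonarch_norm: "nonarch_norm absK scale N"
begin

lemma absK_nonneg: "0 \<le> absK a"
  and absK_eq_0_iff [simp]: "absK a = 0 \<longleftrightarrow> a = 0"
  and absK_mult: "absK (a * b) = absK a * absK b"
  using nonarch_abs unfolding nonarch_abs_def by blast+

lemma absK_0 [simp]: "absK 0 = 0"
  by simp

lemma absK_1 [simp]: "absK 1 = 1"
  using absK_mult[of 1 1] absK_eq_0_iff[of 1] by simp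

lemma absK_minus_1 [simp]: "absK (- 1) = 1"
proof -
  have "absK (- 1) * absK (- 1) = 1"
    using absK_mult[of "- 1" "- 1"] by simp
  then have "(absK (- 1))\<^sup>2 = 1"
    by (simp add: power2_eq_square)
  then show ?thesis
    using absK_nonneg[of "- 1"] by (simp add: power2_eq_1_iff)
qed

lemma absK_inverse: "absK (inverse a) = inverse (absK a)"
proof (cases "a = 0")
  case False
  then have "absK (inverse a) * absK a = 1"
    using absK_mult[of "inverse a" a] by simp
  then show ?thesis
    by (metis inverse_unique mult.commute)
qed simp

lemma absK_power: "absK (a ^ n) = absK a ^ n"
  by (induction n) (simp_all add: absK_mult)

lemma exists_absK_gt_1:
  assumes "nontrivial_abs absK"
  obtains lam where "1 < absK lam"
proof -
  obtain a where a: "a \<noteq> 0" "absK a \<noteq> 1"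
    using assms unfolding nontrivial_abs_def by blast
  show thesis
  proof (cases "1 < absK a")
    case False
    then have "0 < absK a" "absK a < 1"
      using a absK_nonneg[of a] by (simp_all add: less_le)
    then have "1 < absK (inverse a)"
      by (simp add: absK_inverse one_less_inverse)
    then show thesis by (rule that)
  qed (rule that)
qed

lemma N_nonneg: "0 \<le> N x"
  and N_eq_0_iff [simp]: "N x = 0 \<longleftrightarrow> x = 0"
  and N_scale: "N (scale a x) = absK a * N x"
  and N_add_le_max: "N (x + y) \<le> max (N x) (N y)"
  using nonarch_norm unfolding nonarch_norm_def by blast+

lemma N_0 [simp]: "N 0 = 0"
  by simp

lemma N_minus [simp]: "N (- x) = N x"
  using N_scale[of "- 1" x] by simp

lemma N_minus_commute: "N (x - y) = N (y - x)"
  using N_minus[of "x - y"] by simp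

lemma N_add_less: "N x < e \<Longrightarrow> N y < e \<Longrightarrow> N (x + y) < e"
  using N_add_le_max[of x y] by simp

lemma N_diff_less: "N x < e \<Longrightarrow> N y < e \<Longrightarrow> N (x - y) < e"
  using N_add_less[of x e "- y"] by simp

lemma N_triangle_less: "N (x - y) < e \<Longrightarrow> N (y - z) < e \<Longrightarrow> N (x - z) < e"
  using N_add_less[of "x - y" e "y - z"] by simp

subsection \<open>Adherence, closedness and sequences\<close>

definition adherent :: "'e set \<Rightarrow> 'e \<Rightarrow> bool" where
  "adherent U x \<longleftrightarrow> (\<forall>e>0. \<exists>u\<in>U. N (x - u) < e)"

definition norm_closed :: "'e set \<Rightarrow> bool" where
  "norm_closed U \<longleftrightarrow> (\<forall>x. adherent U x \<longrightarrow> x \<in> U)"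

lemma not_adherent_dist_bounded_below:
  assumes "\<not> adherent U x"
  obtains \<delta> where "0 < \<delta>" "\<And>u. u \<in> U \<Longrightarrow> \<delta> \<le> N (x - u)"
proof -
  obtain e where "0 < e" "\<forall>u\<in>U. \<not> N (x - u) < e"
    using assms unfolding adherent_def by blast
  then show thesis
    using that[of e] by (simp add: not_less)
qed

lemma adherent_obtains_seq:
  assumes "adherent U x"
  obtains u where "range u \<subseteq> U" "tendsto_wrt N u x"
proof -
  have "\<exists>u\<in>U. N (x - u) < inverse (real (Suc n))" for n
    using assms unfolding adherent_def by simp
  then obtain u where u: "\<And>n. u n \<in> U" "\<And>n. N (x - u n) < inverse (real (Suc n))"
    by metis
  have "tendsto_wrt N u x"
    unfolding tendsto_wrt_def
  proof (intro allI impI)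
    fix e :: real
    assume "0 < e"
    then obtain M where M: "inverse (real (Suc M)) < e"
      using reals_Archimedean by blast
    have "N (u n - x) < e" if "M \<le> n" for n
    proof -
      have "inverse (real (Suc n)) \<le> inverse (real (Suc M))"
        using that by (simp add: le_imp_inverse_le)
      then show ?thesis
        using u(2)[of n] M N_minus_commute[of x "u n"] by linarith
    qed
    then show "\<exists>M. \<forall>n\<ge>M. N (u n - x) < e"
      by blast
  qed
  moreover have "range u \<subseteq> U"
    using u(1) by auto
  ultimately show thesis
    using that by blast
qed

lemma tendsto_imp_adherent:
  assumes "range u \<subseteq> U" "tendsto_wrt N u x"
  shows "adherent U x"
  unfolding adherent_def
proof (intro allI impI)
  fix e :: real
  assume "0 < e"
  then obtain M where "N (x - u M) < e"
    using assms(2) N_minus_commute unfolding tendsto_wrt_def by (metis order_refl)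
  moreover have "u M \<in> U"
    using assms(1) by auto
  ultimately show "\<exists>y\<in>U. N (x - y) < e"
    by blast
qed

lemma tendsto_imp_cauchy:
  assumes "tendsto_wrt N u x"
  shows "cauchy_wrt N u"
  unfolding cauchy_wrt_def
proof (intro allI impI)
  fix e :: real
  assume "0 < e"
  then obtain M where M: "\<And>n. M \<le> n \<Longrightarrow> N (u n - x) < e"
    using assms unfolding tendsto_wrt_def by blast
  have "N (u m - u n) < e" if "M \<le> m" "M \<le> n" for m n
    using M[OF that(1)] M[OF that(2)] N_minus_commute[of "u n" x] N_triangle_less by metis
  then show "\<exists>M. \<forall>m\<ge>M. \<forall>n\<ge>M. N (u m - u n) < e"
    by blast
qed

lemma tendsto_unique:
  assumes "tendsto_wrt N u x" "tendsto_wrt N u y"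
  shows "x = y"
proof (rule ccontr)
  assume "x \<noteq> y"
  then have "0 < N (x - y)"
    using N_nonneg[of "x - y"] by (simp add: less_le)
  then obtain M1 M2 where "\<And>n. M1 \<le> n \<Longrightarrow> N (u n - x) < N (x - y)"
    "\<And>n. M2 \<le> n \<Longrightarrow> N (u n - y) < N (x - y)"
    using assms unfolding tendsto_wrt_def by blast
  then have "N (x - u (max M1 M2)) < N (x - y)" "N (u (max M1 M2) - y) < N (x - y)"
    using N_minus_commute by auto
  then show False
    using N_triangle_less by blast
qed

lemma tendsto_diff:
  assumes "tendsto_wrt N u x" "tendsto_wrt N v y"
  shows "tendsto_wrt N (\<lambda>n. u n - v n) (x - y)"
  unfolding tendsto_wrt_def
proof (intro allI impI)
  fix e :: real
  assume "0 < e"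
  then obtain M1 M2 where "\<And>n. M1 \<le> n \<Longrightarrow> N (u n - x) < e" "\<And>n. M2 \<le> n \<Longrightarrow> N (v n - y) < e"
    using assms unfolding tendsto_wrt_def by blast
  then have "N ((u n - v n) - (x - y)) < e" if "max M1 M2 \<le> n" for n
    using that N_diff_less[of "u n - x" e "v n - y"] by (simp add: algebra_simps)
  then show "\<exists>M. \<forall>n\<ge>M. N ((u n - v n) - (x - y)) < e"
    by blast
qed

lemma tendsto_scale_left:
  assumes "tendsto_wrt absK c l"
  shows "tendsto_wrt N (\<lambda>n. scale (c n) a) (scale l a)"
  unfolding tendsto_wrt_def
proof (intro allI impI)
  fix e :: real
  assume e: "0 < e"
  have "0 < e / (N a + 1)"
    using e N_nonneg[of a] by simp
  then obtain M where M: "\<And>n. M \<le> n \<Longrightarrow> absK (c n - l) < e / (N a + 1)"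
    using assms unfolding tendsto_wrt_def by blast
  have "N (scale (c n) a - scale l a) < e" if "M \<le> n" for n
  proof -
    have "N (scale (c n) a - scale l a) = absK (c n - l) * N a"
      by (simp add: N_scale flip: scale_left_diff_distrib)
    also have "\<dots> \<le> e / (N a + 1) * N a"
      using mult_right_mono[OF less_imp_le[OF M[OF that]] N_nonneg] .
    also have "\<dots> < e"
      using e N_nonneg[of a] by (simp add: field_simps)
    finally show ?thesis .
  qed
  then show "\<exists>M. \<forall>n\<ge>M. N (scale (c n) a - scale l a) < e"
    by blast
qed

lemma banach_subset_imp_norm_closed:
  assumes "banach_subset N V"
  shows "norm_closed V"
  unfolding norm_closed_def
proof (intro allI impI)
  fix x
  assume "adherent V x"
  then obtain u where u: "range u \<subseteq> V" "tendsto_wrt N u x"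
    by (rule adherent_obtains_seq)
  moreover have "cauchy_wrt N u"
    using u(2) by (rule tendsto_imp_cauchy)
  ultimately obtain l where "l \<in> V" "tendsto_wrt N u l"
    using assms unfolding banach_subset_iff by blast
  then show "x \<in> V"
    using u(2) tendsto_unique by blast
qed

lemma norm_closed_span_empty: "norm_closed (span {})"
  unfolding norm_closed_def adherent_def
proof (intro allI impI)
  fix x
  assume "\<forall>e>0. \<exists>u\<in>span {}. N (x - u) < e"
  then have "\<not> 0 < N x"
    by (metis diff_zero less_irrefl singletonD span_empty)
  then show "x \<in> span {}"
    using N_nonneg[of x] by simp
qed

lemma dist_scale_span_ge:
  assumes "\<And>u. u \<in> span B \<Longrightarrow> d \<le> N (a - u)" "b \<in> span B"
  shows "absK c * d \<le> N (scale c a - b)"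
proof (cases "c = 0")
  case False
  have "d \<le> N (a - scale (inverse c) b)"
    using assms span_scale by blast
  then have "absK c * d \<le> absK c * N (a - scale (inverse c) b)"
    using absK_nonneg by (simp add: mult_left_mono)
  also have "\<dots> = N (scale c (a - scale (inverse c) b))"
    by (simp add: N_scale)
  also have "\<dots> = N (scale c a - b)"
    using False by (simp add: scale_right_diff_distrib)
  finally show ?thesis .
qed (simp add: N_nonneg)

subsection \<open>The Baire category step\<close>

lemma abs_convex_diff:
  assumes "abs_convex absK scale A" "x \<in> A" "y \<in> A"
  shows "x - y \<in> A"
proof -
  have "- y \<in> A"
    using assms(1,3) absK_minus_1 unfolding abs_convex_def
    by (metis order_refl scale_minus_left scale_one)
  then show ?thesis
    using assms(1,2) unfolding abs_convex_def diff_conv_add_uminus by blast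
qed

lemma abs_convex_absorbs_span:
  assumes A: "abs_convex absK scale A" and "v \<in> span A"
  shows "\<exists>R. \<forall>c. R \<le> absK c \<longrightarrow> scale (inverse c) v \<in> A"
  using assms(2)
proof (induction rule: span_induct_alt)
  case base
  then show ?case
    using A unfolding abs_convex_def by simp
next
  case (step a x y)
  then obtain R where R: "\<And>c. R \<le> absK c \<Longrightarrow> scale (inverse c) y \<in> A"
    by blast
  have "scale (inverse c) (scale a x + y) \<in> A" if c: "max (absK a) R \<le> absK c" for c
  proof -
    have "absK (inverse c * a) \<le> 1"
    proof (cases "c = 0")
      case False
      then have "0 < absK c"
        using absK_nonneg[of c] by (simp add: less_le)
      have "absK (inverse c * a) = absK a / absK c"
        by (simp only: absK_mult absK_inverse divide_inverse_commute)
      then show ?thesis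
        using c \<open>0 < absK c\<close> by simp
    qed simp
    then have "scale (inverse c * a) x \<in> A"
      using A step(1) unfolding abs_convex_def by blast
    moreover have "scale (inverse c) y \<in> A"
      using R c by simp
    ultimately show ?thesis
      using A unfolding abs_convex_def by (simp add: scale_right_distrib)
  qed
  then show ?case
    by blast
qed

lemma Metric_space_norm: "Metric_space V (\<lambda>x y. N (x - y))"
proof
  show "N (x - z) \<le> N (x - y) + N (y - z)" for x y z
    using N_add_le_max[of "x - y" "y - z"] N_nonneg[of "x - y"] N_nonneg[of "y - z"] by simp
qed (simp_all add: N_nonneg N_minus_commute)

lemma banach_subset_mcomplete:
  assumes "banach_subset N V"
  shows "Metric_space.mcomplete V (\<lambda>x y. N (x - y))"
proof -
  interpret V: Metric_space V "\<lambda>x y. N (x - y)"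
    by (rule Metric_space_norm)
  show ?thesis
    unfolding V.mcomplete_def V.MCauchy_def V.limit_metric_sequentially
  proof (intro allI impI)
    fix \<sigma> :: "nat \<Rightarrow> 'e"
    assume "range \<sigma> \<subseteq> V \<and> (\<forall>\<epsilon>>0. \<exists>M. \<forall>n n'. M \<le> n \<longrightarrow> M \<le> n' \<longrightarrow> N (\<sigma> n - \<sigma> n') < \<epsilon>)"
    then have \<sigma>: "range \<sigma> \<subseteq> V" and "cauchy_wrt N \<sigma>"
      unfolding cauchy_wrt_def by auto
    then obtain l where "l \<in> V" "tendsto_wrt N \<sigma> l"
      using assms unfolding banach_subset_iff by blast
    moreover have "\<And>n. \<sigma> n \<in> V"
      using \<sigma> by auto
    ultimately show "\<exists>l. l \<in> V \<and> (\<forall>\<epsilon>>0. \<exists>M. \<forall>n\<ge>M. \<sigma> n \<in> V \<and> N (\<sigma> n - l) < \<epsilon>)"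
      unfolding tendsto_wrt_def by blast
  qed
qed

lemma banach_subset_Baire:
  fixes M :: "nat \<Rightarrow> 'e set"
  assumes complete: "banach_subset N V" and "V \<noteq> {}" and cover: "V \<subseteq> (\<Union>n. M n)"
  obtains n y r where "y \<in> V" "0 < r" "\<And>z. z \<in> V \<Longrightarrow> N (z - y) < r \<Longrightarrow> adherent (M n) z"
proof -
  interpret V: Metric_space V "\<lambda>x y. N (x - y)"
    by (rule Metric_space_norm)
  define C where "C n = V.mtopology closure_of M n" for n
  have "V \<subseteq> \<Union> (range C)"
  proof
    fix v
    assume "v \<in> V"
    then obtain n where "v \<in> M n"
      using cover by blast
    then have "v \<in> C n"
      using \<open>v \<in> V\<close> unfolding C_def V.metric_closure_of by auto
    then show "v \<in> \<Union> (range C)"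
      by blast
  qed
  moreover have "C n \<subseteq> V" for n
    unfolding C_def by (metis closure_of_subset_topspace V.topspace_mtopology)
  ultimately have "\<Union> (range C) = V"
    by blast
  then have "V.mtopology interior_of \<Union> (range C) \<noteq> {}"
    using assms(2) by (metis interior_of_topspace V.topspace_mtopology)
  then have "\<exists>T\<in>range C. V.mtopology interior_of T \<noteq> {}"
  proof (rule contrapos_np)
    assume "\<not> (\<exists>T\<in>range C. V.mtopology interior_of T \<noteq> {})"
    then show "V.mtopology interior_of \<Union> (range C) = {}"
      using banach_subset_mcomplete[OF complete]
      by (intro V.metric_Baire_category_alt) (auto simp: C_def)
  qed
  then obtain n y r where y: "y \<in> V" "0 < r" "V.mball y r \<subseteq> C n"
    unfolding V.metric_interior_of by blast
  have "adherent (M n) z" if "z \<in> V" "N (z - y) < r" for z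
  proof -
    have "z \<in> V.mball y r"
      using y(1) that N_minus_commute[of z y] by simp
    then have "z \<in> C n"
      using y(3) by blast
    then show ?thesis
      unfolding C_def V.metric_closure_of adherent_def by auto
  qed
  with y show thesis
    using that by blast
qed

lemma adherent_ball_of_scaled:
  assumes A: "abs_convex absK scale A" and V: "subspace V" "y \<in> V" and c: "c \<noteq> 0"
    and adh: "\<And>z. z \<in> V \<Longrightarrow> N (z - y) < r \<Longrightarrow> adherent (scale c ` A) z"
    and v: "v \<in> V" "N v < r / absK c"
  shows "adherent A v"
  unfolding adherent_def
proof (intro allI impI)
  fix e :: real
  assume "0 < e"
  have c_pos: "0 < absK c"
    using c absK_nonneg[of c] by (simp add: less_le)
  moreover have "0 < r / absK c"
    using v(2) N_nonneg[of v] by linarith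
  ultimately have "0 < r"
    by (simp add: zero_less_divide_iff)
  have ec: "0 < e * absK c"
    using \<open>0 < e\<close> c_pos by simp
  (* c v is the difference of the points y + c v and y of the ball around y. *)
  have "y + scale c v \<in> V"
    using V v(1) by (blast intro: subspace_add subspace_scale)
  moreover have "N (y + scale c v - y) < r"
    using v(2) c_pos by (simp add: N_scale field_simps)
  ultimately obtain a1 where a1: "a1 \<in> A" "N (y + scale c v - scale c a1) < e * absK c"
    using adh ec unfolding adherent_def by blast
  obtain a2 where a2: "a2 \<in> A" "N (y - scale c a2) < e * absK c"
    using adh[OF V(2)] \<open>0 < r\<close> ec unfolding adherent_def by auto
  have eq: "scale c (v - (a1 - a2)) = (y + scale c v - scale c a1) - (y - scale c a2)"
    by (simp add: algebra_simps)
  have "N (scale c (v - (a1 - a2))) < e * absK c"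
    unfolding eq by (rule N_diff_less[OF a1(2) a2(2)])
  then have "absK c * N (v - (a1 - a2)) < e * absK c"
    by (simp only: N_scale)
  then have "N (v - (a1 - a2)) < e"
    using c_pos by (simp add: mult.commute)
  moreover have "a1 - a2 \<in> A"
    using A a1(1) a2(1) by (rule abs_convex_diff)
  ultimately show "\<exists>a\<in>A. N (v - a) < e"
    by blast
qed

lemma banach_span_ball_adherent:
  assumes A: "abs_convex absK scale A" and complete: "banach_subset N (span A)"
    and lam: "1 < absK lam"
  obtains r where "0 < r" "\<And>v. v \<in> span A \<Longrightarrow> N v < r \<Longrightarrow> adherent A v"
proof -
  have lam0: "lam \<noteq> 0"
    using lam by auto
  have "span A \<subseteq> (\<Union>n. scale (lam ^ n) ` A)"
  proof
    fix v
    assume "v \<in> span A"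
    then obtain R where R: "\<And>c. R \<le> absK c \<Longrightarrow> scale (inverse c) v \<in> A"
      using abs_convex_absorbs_span[OF A] by blast
    obtain n where "R < absK lam ^ n"
      using real_arch_pow[OF lam] by blast
    then have "scale (inverse (lam ^ n)) v \<in> A"
      using R by (simp add: absK_power)
    moreover have "v = scale (lam ^ n) (scale (inverse (lam ^ n)) v)"
      using lam0 by simp
    ultimately have "v \<in> scale (lam ^ n) ` A"
      by (rule rev_image_eqI)
    then show "v \<in> (\<Union>n. scale (lam ^ n) ` A)"
      by (rule UN_I[OF UNIV_I])
  qed
  moreover have "span A \<noteq> {}"
    using span_zero by blast
  ultimately obtain n y r where y: "y \<in> span A" "0 < r"
    and adh: "\<And>z. z \<in> span A \<Longrightarrow> N (z - y) < r \<Longrightarrow> adherent (scale (lam ^ n) ` A) z"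
    using banach_subset_Baire[OF complete] by metis
  have "0 < r / absK (lam ^ n)"
    using y(2) lam by (simp add: absK_power)
  moreover have "adherent A v" if "v \<in> span A" "N v < r / absK (lam ^ n)" for v
    using adherent_ball_of_scaled[OF A subspace_span y(1) _ adh that] lam0 by simp
  ultimately show thesis
    using that by blast
qed

subsection \<open>Uniform approximation by subspaces\<close>

definition near :: "'e set \<Rightarrow> 'e set \<Rightarrow> real \<Rightarrow> bool" where
  "near X W e \<longleftrightarrow> (\<forall>x\<in>X. \<exists>w\<in>W. N (x - w) < e)"

lemma near_mono:
  assumes "near X W e" "W \<subseteq> W'" "e \<le> e'"
  shows "near X W' e'"
  using assms unfolding near_def by (meson less_le_trans subsetD)

lemma near_adherent:
  assumes "near A W e" "\<And>x. x \<in> X \<Longrightarrow> adherent A x"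
  shows "near X W e"
  unfolding near_def
proof
  fix x
  assume "x \<in> X"
  then have adh: "adherent A x"
    by (rule assms(2))
  then obtain a0 where "a0 \<in> A"
    unfolding adherent_def by (meson zero_less_one)
  then have "0 < e"
    using assms(1) N_nonneg unfolding near_def by (meson le_less_trans)
  then obtain a where a: "a \<in> A" "N (x - a) < e"
    using adh unfolding adherent_def by blast
  then obtain w where "w \<in> W" "N (a - w) < e"
    using assms(1) unfolding near_def by blast
  then show "\<exists>w\<in>W. N (x - w) < e"
    using a(2) N_triangle_less by blast
qed

lemma near_ball_iterate:
  assumes V: "subspace V" "span T \<subseteq> V" and lam: "1 < absK lam"
    and near: "near {x \<in> V. N x < r} (span T) (r / absK lam)"
  shows "near {x \<in> V. N x < r} (span T) (r / absK lam ^ n)"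
proof (induction n)
  case 0
  then show ?case
    unfolding near_def using span_zero by force
next
  case (Suc n)
  have pos: "0 < absK lam ^ n" and lam0: "lam \<noteq> 0"
    using lam by auto
  show ?case
    unfolding near_def
  proof (intro ballI)
    fix x
    assume x: "x \<in> {x \<in> V. N x < r}"
    then obtain w where w: "w \<in> span T" "N (x - w) < r / absK lam ^ n"
      using Suc unfolding near_def by blast
    define y where "y = scale (lam ^ n) (x - w)"
    have "y \<in> V"
      using x w(1) V unfolding y_def by (blast intro: subspace_scale subspace_diff)
    moreover have "N y < r"
    proof -
      have "N y = absK lam ^ n * N (x - w)"
        by (simp only: y_def N_scale absK_power)
      then show ?thesis
        using w(2) pos by (simp add: field_simps)
    qed
    ultimately obtain w' where w': "w' \<in> span T" "N (y - w') < r / absK lam"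
      using near unfolding near_def by blast
    have "x - (w + scale (inverse (lam ^ n)) w') = scale (inverse (lam ^ n)) (y - w')"
      using lam0 by (simp add: y_def scale_right_diff_distrib)
    then have "N (x - (w + scale (inverse (lam ^ n)) w')) = N (y - w') / absK lam ^ n"
      by (simp only: N_scale absK_inverse absK_power divide_inverse mult.commute)
    also have "\<dots> < (r / absK lam) / absK lam ^ n"
      using w'(2) pos by (rule divide_strict_right_mono)
    also have "\<dots> = r / absK lam ^ Suc n"
      by simp
    finally have "N (x - (w + scale (inverse (lam ^ n)) w')) < r / absK lam ^ Suc n" .
    moreover have "w + scale (inverse (lam ^ n)) w' \<in> span T"
      using w(1) w'(1) by (intro span_add span_scale)
    ultimately show "\<exists>w\<in>span T. N (x - w) < r / absK lam ^ Suc n"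
      by blast
  qed
qed

lemma subspace_subset_span_if_near_ball:
  assumes V: "subspace V" "span T \<subseteq> V" and closed: "norm_closed (span T)"
    and r: "0 < r" and lam: "1 < absK lam"
    and near: "near {x \<in> V. N x < r} (span T) (r / absK lam)"
  shows "V \<subseteq> span T"
proof
  fix v
  assume v: "v \<in> V"
  have lam0: "lam \<noteq> 0"
    using lam by auto
  obtain n where n: "N v / r < absK lam ^ n"
    using real_arch_pow[OF lam] by blast
  define x where "x = scale (inverse (lam ^ n)) v"
  have "x \<in> V"
    using V(1) v unfolding x_def by (rule subspace_scale)
  moreover have "N x < r"
  proof -
    have "N x = N v / absK lam ^ n"
      by (simp only: x_def N_scale absK_inverse absK_power divide_inverse mult.commute)
    then show ?thesis
      using n r lam by (simp add: field_simps)
  qed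
  ultimately have x: "x \<in> {x \<in> V. N x < r}"
    by blast
  have "adherent (span T) x"
    unfolding adherent_def
  proof (intro allI impI)
    fix e :: real
    assume "0 < e"
    obtain m where m: "r / e < absK lam ^ m"
      using real_arch_pow[OF lam] by blast
    obtain w where "w \<in> span T" "N (x - w) < r / absK lam ^ m"
      using near_ball_iterate[OF V lam near, of m] x unfolding near_def by blast
    moreover have "r / absK lam ^ m < e"
      using m \<open>0 < e\<close> lam by (simp add: field_simps)
    ultimately show "\<exists>w\<in>span T. N (x - w) < e"
      by force
  qed
  then have "x \<in> span T"
    using closed unfolding norm_closed_def by blast
  then have "scale (lam ^ n) x \<in> span T"
    by (rule span_scale)
  then show "v \<in> span T"
    using lam0 by (simp add: x_def)
qed

lemma exists_almost_nearest:
  assumes "\<not> adherent U s" "U \<noteq> {}" "1 < q"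
  obtains u0 where "u0 \<in> U" "\<And>u. u \<in> U \<Longrightarrow> N (s - u0) \<le> q * N (s - u)"
proof -
  obtain \<delta> where \<delta>: "0 < \<delta>" "\<And>u. u \<in> U \<Longrightarrow> \<delta> \<le> N (s - u)"
    using not_adherent_dist_bounded_below[OF assms(1)] by blast
  define D where "D = (\<lambda>u. N (s - u)) ` U"
  have "bdd_below D"
    unfolding D_def by (rule bdd_belowI[of _ 0]) (auto simp: N_nonneg)
  then have d_le: "Inf D \<le> N (s - u)" if "u \<in> U" for u
    using that unfolding D_def by (simp add: cInf_lower)
  have "\<delta> \<le> Inf D"
    unfolding D_def using assms(2) \<delta>(2) by (rule cINF_greatest)
  then have "Inf D < q * Inf D"
    using \<delta>(1) assms(3) by simp
  then obtain t where "t \<in> D" "t < q * Inf D"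
    using assms(2) cInf_lessD[of D] unfolding D_def by blast
  then obtain u0 where u0: "u0 \<in> U" "N (s - u0) < q * Inf D"
    unfolding D_def by blast
  have "N (s - u0) \<le> q * N (s - u)" if "u \<in> U" for u
  proof -
    have "q * Inf D \<le> q * N (s - u)"
      using d_le[OF that] assms(3) by simp
    then show ?thesis
      using u0(2) by linarith
  qed
  with u0(1) show thesis
    using that by blast
qed

lemma almost_nearest_scale:
  assumes "subspace U" "u \<in> U" "0 \<le> q"
    and u0: "\<And>u. u \<in> U \<Longrightarrow> N (s - u0) \<le> q * N (s - u)"
  shows "N (scale c (s - u0)) \<le> q * N (scale c s - u)"
proof (cases "c = 0")
  case False
  have "scale (inverse c) u \<in> U"
    using assms(1,2) by (rule subspace_scale)
  then have "absK c * N (s - u0) \<le> absK c * (q * N (s - scale (inverse c) u))"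
    using u0 absK_nonneg by (simp add: mult_left_mono)
  also have "\<dots> = q * N (scale c (s - scale (inverse c) u))"
    by (simp add: N_scale)
  also have "\<dots> = q * N (scale c s - u)"
    using False by (simp add: scale_right_diff_distrib)
  finally show ?thesis
    by (simp add: N_scale)
qed (simp add: assms(3) N_nonneg)

lemma span_insert_subset_of_diff:
  assumes "s - v \<in> span R"
  shows "span (insert s R) \<subseteq> span (insert v R)"
proof (rule span_minimal)
  have "s - v \<in> span (insert v R)"
    using assms span_mono[of R "insert v R"] by blast
  then have "v + (s - v) \<in> span (insert v R)"
    using span_add span_base[of v "insert v R"] by blast
  then show "insert s R \<subseteq> span (insert v R)"
    by (auto intro: span_base)
qed simp

lemma near_insert_almost_nearest:
  assumes U: "subspace U" "R \<subseteq> U" "X \<subseteq> U" and e: "0 < \<epsilon>" "\<epsilon> \<le> \<epsilon>'"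
    and u0: "\<And>u. u \<in> U \<Longrightarrow> N (s - u0) \<le> \<epsilon>' / \<epsilon> * N (s - u)"
    and near_s: "near X (span (insert s R)) \<epsilon>"
  shows "near X (span (insert u0 R)) \<epsilon>'"
  unfolding near_def
proof
  fix x
  assume "x \<in> X"
  then obtain w where w: "w \<in> span (insert s R)" "N (x - w) < \<epsilon>"
    using near_s unfolding near_def by blast
  then obtain c where c: "w - scale c s \<in> span R"
    unfolding span_insert by blast
  define w1 where "w1 = w - scale c s"
  have "span R \<subseteq> U"
    using U(2,1) by (rule span_minimal)
  then have "x - w1 \<in> U"
    using \<open>x \<in> X\<close> U c unfolding w1_def by (blast intro: subspace_diff)
  then have "N (scale c (s - u0)) \<le> \<epsilon>' / \<epsilon> * N (scale c s - (x - w1))"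
    using U(1) u0 e by (intro almost_nearest_scale) auto
  also have "\<dots> = \<epsilon>' / \<epsilon> * N (x - w)"
    by (simp add: w1_def N_minus_commute)
  also have "\<dots> < \<epsilon>'"
    using w(2) e by (simp add: field_simps)
  finally have "N (x - (w1 + scale c u0)) < \<epsilon>'"
    using N_add_less[of "x - w" \<epsilon>' "scale c (s - u0)"] w(2) e
    by (simp add: w1_def algebra_simps)
  moreover have "w1 + scale c u0 \<in> span (insert u0 R)"
    using c span_mono[of R "insert u0 R"] unfolding w1_def
    by (auto intro!: span_add span_scale intro: span_base)
  ultimately show "\<exists>w\<in>span (insert u0 R). N (x - w) < \<epsilon>'"
    by blast
qed

lemma near_replace_vector:
  assumes closed: "norm_closed (span (V \<union> R))" and X: "X \<subseteq> span V"
    and e: "0 < \<epsilon>" "\<epsilon> < \<epsilon>'" and near_s: "near X (span (insert s R)) \<epsilon>"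
  obtains v where "v \<in> span V" "near X (span (insert v R)) \<epsilon>'"
proof -
  obtain s' where s': "s' \<in> span (V \<union> R)" "near X (span (insert s' R)) \<epsilon>'"
  proof (cases "s \<in> span (V \<union> R)")
    case True
    moreover have "near X (span (insert s R)) \<epsilon>'"
      using near_s subset_refl less_imp_le[OF e(2)] by (rule near_mono)
    ultimately show thesis
      by (rule that)
  next
    case False
    then have not_adh: "\<not> adherent (span (V \<union> R)) s"
      using closed unfolding norm_closed_def by blast
    have ne: "span (V \<union> R) \<noteq> {}"
      using span_zero by blast
    have q: "1 < \<epsilon>' / \<epsilon>"
      using e by simp
    obtain u0 where u0: "u0 \<in> span (V \<union> R)"
      "\<And>u. u \<in> span (V \<union> R) \<Longrightarrow> N (s - u0) \<le> \<epsilon>' / \<epsilon> * N (s - u)"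
      using exists_almost_nearest[OF not_adh ne q] by blast
    have "R \<subseteq> span (V \<union> R)" "X \<subseteq> span (V \<union> R)"
      using span_superset X span_mono[of V "V \<union> R"] by blast+
    then have "near X (span (insert u0 R)) \<epsilon>'"
      using e(1) less_imp_le[OF e(2)] u0(2) near_s
      by (rule near_insert_almost_nearest[OF subspace_span])
    with u0(1) show thesis
      by (rule that)
  qed
  then obtain v r where v: "v \<in> span V" "r \<in> span R" "s' = v + r"
    unfolding span_Un by blast
  then have "span (insert s' R) \<subseteq> span (insert v R)"
    by (intro span_insert_subset_of_diff) simp
  with s'(2) have "near X (span (insert v R)) \<epsilon>'"
    by (rule near_mono) simp
  with v(1) show thesis
    by (rule that)
qed

end

locale complete_nonarch_normed_space = nonarch_normed_space +
  assumes complete_abs: "complete_abs absK"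
begin

lemma norm_closed_span_insert:
  assumes closed: "norm_closed (span B)"
  shows "norm_closed (span (insert a B))"
proof (cases "a \<in> span B")
  case True
  then show ?thesis
    using closed span_redundant by simp
next
  case False
  then obtain da where da: "0 < da" "\<And>u. u \<in> span B \<Longrightarrow> da \<le> N (a - u)"
    using closed unfolding norm_closed_def by (meson not_adherent_dist_bounded_below)
  show ?thesis
    unfolding norm_closed_def
  proof (intro allI impI)
    fix x
    assume "adherent (span (insert a B)) x"
    then obtain u where u: "range u \<subseteq> span (insert a B)" "tendsto_wrt N u x"
      by (rule adherent_obtains_seq)
    then have "\<forall>n. \<exists>k. u n - scale k a \<in> span B"
      unfolding span_insert by blast
    then obtain c where c: "\<And>n. u n - scale (c n) a \<in> span B"
      by metis
    have "cauchy_wrt absK c"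
      unfolding cauchy_wrt_def
    proof (intro allI impI)
      fix e :: real
      assume "0 < e"
      then obtain M where M: "\<And>m n. M \<le> m \<Longrightarrow> M \<le> n \<Longrightarrow> N (u m - u n) < e * da"
        using tendsto_imp_cauchy[OF u(2)] da(1) unfolding cauchy_wrt_def by (meson mult_pos_pos)
      have "absK (c m - c n) < e" if "M \<le> m" "M \<le> n" for m n
      proof -
        have "u m - u n = scale (c m - c n) a - ((u n - scale (c n) a) - (u m - scale (c m) a))"
          by (simp add: scale_left_diff_distrib)
        then have "absK (c m - c n) * da \<le> N (u m - u n)"
          using dist_scale_span_ge[OF da(2)] c span_diff by metis
        then have "absK (c m - c n) * da < e * da"
          using M[OF that] by linarith
        then show ?thesis
          using da(1) by simp
      qed
      then show "\<exists>M. \<forall>m\<ge>M. \<forall>n\<ge>M. absK (c m - c n) < e"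
        by blast
    qed
    then obtain l where "tendsto_wrt absK c l"
      using complete_abs unfolding complete_abs_iff by blast
    then have "tendsto_wrt N (\<lambda>n. u n - scale (c n) a) (x - scale l a)"
      by (rule tendsto_diff[OF u(2) tendsto_scale_left])
    then have "adherent (span B) (x - scale l a)"
      using c by (intro tendsto_imp_adherent) auto
    then have "x - scale l a \<in> span B"
      using closed unfolding norm_closed_def by blast
    then show "x \<in> span (insert a B)"
      unfolding span_insert by blast
  qed
qed

lemma norm_closed_span_Un:
  assumes "finite S" "norm_closed (span B)"
  shows "norm_closed (span (B \<union> S))"
  using assms
proof (induction S rule: finite_induct)
  case (insert a S)
  then have "norm_closed (span (insert a (B \<union> S)))"
    by (intro norm_closed_span_insert) blast
  then show ?case
    by (metis Un_insert_right)
qed simp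

lemma norm_closed_finite_span:
  assumes "finite S"
  shows "norm_closed (span S)"
  using norm_closed_span_Un[OF assms norm_closed_span_empty] by (metis Un_empty_left)

(* T0 collects the vectors of V that have already replaced vectors of S; every replacement
   uses up part of the slack between \<epsilon> and \<delta>. *)
lemma near_span_transfer:
  assumes V: "subspace V" "norm_closed V" "X \<subseteq> V"
    and "finite S" "finite T0" "T0 \<subseteq> V" "0 < \<epsilon>" "\<epsilon> < \<delta>"
    and "near X (span (S \<union> T0)) \<epsilon>"
  shows "\<exists>T. finite T \<and> T \<subseteq> V \<and> near X (span T) \<delta>"
  using assms(4-)
proof (induction S arbitrary: T0 \<epsilon> rule: finite_induct)
  case empty
  then show ?case
    using near_mono[of X "span T0" \<epsilon> "span T0" \<delta>] by auto
next
  case (insert s S)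
  define \<epsilon>' where "\<epsilon>' = (\<epsilon> + \<delta>) / 2"
  have e': "\<epsilon> < \<epsilon>'" "0 < \<epsilon>'" "\<epsilon>' < \<delta>"
    using insert.prems unfolding \<epsilon>'_def by auto
  have span_V: "span V = V"
    using V(1) by simp
  have closed: "norm_closed (span (V \<union> (S \<union> T0)))"
    using insert.hyps(1) insert.prems(1) V(2) by (intro norm_closed_span_Un) (simp_all add: span_V)
  have "X \<subseteq> span V"
    using V(3) span_superset by (rule subset_trans)
  moreover have "near X (span (insert s (S \<union> T0))) \<epsilon>"
    using insert.prems(5) by simp
  ultimately obtain v where v: "v \<in> V" "near X (span (insert v (S \<union> T0))) \<epsilon>'"
    using near_replace_vector[OF closed _ insert.prems(3) e'(1)] span_V by metis
  have "S \<union> insert v T0 = insert v (S \<union> T0)"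
    by blast
  then show ?case
    using insert.IH[of "insert v T0" \<epsilon>'] insert.prems(1,2) e' v by simp
qed

lemma local_compactoid_near_finite_span:
  assumes "local_compactoid absK scale N A" "subspace V" "norm_closed V" "A \<subseteq> V" "0 < \<delta>"
  shows "\<exists>T. finite T \<and> T \<subseteq> V \<and> near A (span T) \<delta>"
proof -
  have "zero_nhd N {x. N x < \<delta> / 2}"
    unfolding zero_nhd_def using assms(5) by (intro exI[of _ "\<delta> / 2"]) auto
  then obtain S where S: "finite S"
    "A \<subseteq> {u + s | u s. u \<in> {x. N x < \<delta> / 2} \<and> s \<in> span S}"
    using assms(1) unfolding local_compactoid_def by blast
  have "near A (span S) (\<delta> / 2)"
    unfolding near_def
  proof
    fix a
    assume "a \<in> A"
    then obtain u s where "a = u + s" "N u < \<delta> / 2" "s \<in> span S"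
      using S(2) by blast
    then show "\<exists>w\<in>span S. N (a - w) < \<delta> / 2"
      by (intro bexI[of _ s]) simp_all
  qed
  then show ?thesis
    using near_span_transfer[of V A S "{}" "\<delta> / 2" \<delta>] S(1) assms(2-5) by auto
qed

theorem local_compactoid_span_not_banach:
  assumes "nontrivial_abs absK" and lc: "local_compactoid absK scale N A"
    and "infinite_dimensional scale (span A)"
  shows "\<not> banach_subset N (span A)"
proof
  assume complete: "banach_subset N (span A)"
  obtain lam where lam: "1 < absK lam"
    using exists_absK_gt_1[OF assms(1)] .
  have "abs_convex absK scale A"
    using lc unfolding local_compactoid_def by blast
  then obtain r where r: "0 < r" "\<And>v. v \<in> span A \<Longrightarrow> N v < r \<Longrightarrow> adherent A v"
    using banach_span_ball_adherent[OF _ complete lam] by blast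
  have "norm_closed (span A)"
    using complete by (rule banach_subset_imp_norm_closed)
  moreover have "0 < r / absK lam"
    using r(1) lam by simp
  ultimately obtain T where T: "finite T" "T \<subseteq> span A" "near A (span T) (r / absK lam)"
    using local_compactoid_near_finite_span[OF lc subspace_span _ span_superset] by blast
  have span_T: "span T \<subseteq> span A"
    using T(2) by (simp add: span_minimal)
  have "near {x \<in> span A. N x < r} (span T) (r / absK lam)"
    using r(2) by (intro near_adherent[OF T(3)]) auto
  then have "span A \<subseteq> span T"
    using subspace_subset_span_if_near_ball[OF subspace_span span_T norm_closed_finite_span[OF T(1)] r(1) lam]
    by blast
  with span_T have "span T = span A"
    by (rule antisym)
  then show False
    using assms(3) T(1,2) unfolding infinite_dimensional_def by blast
qed

end

theorem mainTheorem11: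
  fixes absK :: "'k::field \<Rightarrow> real"
    and scale :: "'k \<Rightarrow> 'e::ab_group_add \<Rightarrow> 'e"
    and N :: "'e \<Rightarrow> real"
    and A :: "'e set"
  assumes "nonarch_valued_field absK"
    and "vector_space scale"
    and "nonarch_norm absK scale N"
    and "local_compactoid absK scale N A"
    and "infinite_dimensional scale (module.span scale A)"
  shows "\<not> banach_subset N (module.span scale A)"
proof -
  interpret complete_nonarch_normed_space scale absK N
    using assms(1-3) unfolding nonarch_valued_field_def
    by (intro complete_nonarch_normed_space.intro nonarch_normed_space.intro
        complete_nonarch_normed_space_axioms.intro nonarch_normed_space_axioms.intro) auto
  show ?thesis
    using assms(1,4,5) unfolding nonarch_valued_field_def
    by (intro local_compactoid_span_not_banach) auto
qed

end
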